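(* For an integer $n>1$ define, for every integer $1\le r\le n-1$, $$E^{P}_{n}(r)=\frac{r}{n}\sum_{k=r+1}^{n}\frac{1+\frac{k}{n}}{k-1},$$ and let $\mathcal{M}(n)$ be a value of $r$ at which $E^P_n$ attains its maximum. Let $\mu=\frac12 W(2)=0.42630\dots$. Then (i) $\lim_{n\to\infty}\mathcal{M}(n)/n=\mu$; (ii) $\lim_{n\to\infty}E^P_n(\mathcal{M}(n))=\lim_{n\to\infty}E^P_n(\lfloor\mu n\rfloor)=\mu(1+\mu)=0.608037\dots$.
   Context: $W$ denotes the principal (main) branch of the Lambert $W$ function, i.e. the inverse of $z\mapsto ze^z$ on $[-1,\infty)$, so that $z=W(ze^z)$ for $z\ge -1$. *)

theory Defs
  imports Complex_Main
begin

definition lambertW :: "real \<Rightarrow> real" where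
  "lambertW y = (THE z. z \<ge> -1 \<and> z * exp z = y)"

definition EP :: "nat \<Rightarrow> nat \<Rightarrow> real" where
  "EP n r = (real r / real n) * (\<Sum>k = r+1..n. (1 + real k / real n) / (real k - 1))"

definition mu :: real where
  "mu = lambertW 2 / 2"

end

theory Submission
  imports Defs "HOL-Real_Asymp.Real_Asymp"
begin

text \<open>Writing \<open>x = r/n\<close>, the sum defining \<open>E\<^sup>P\<^sub>n(r)\<close> is \<open>1 - x\<close> plus \<open>(1 + 1/n)\<close> times the
  harmonic sum of \<open>1/j\<close> over \<open>r \<le> j < n\<close>, which is \<open>ln (1/x) + O(1/r)\<close>. Hence
  \<open>E\<^sup>P\<^sub>n(r) = F(x) + O(1/n)\<close> uniformly in \<open>r\<close>, where \<open>F(x) = x (1 - ln x - x)\<close>. Since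
  \<open>ln \<mu> = -2\<mu>\<close> (that is, \<open>2\<mu> e\<^sup>2\<^sup>\<mu> = 2\<close>), the inequality \<open>ln y \<le> y - 1\<close> at \<open>y = \<mu>/x\<close>
  gives \<open>F(x) + (x - \<mu>)\<^sup>2 \<le> F(\<mu>) = \<mu>(1 + \<mu>)\<close>. So the maximal value is squeezed between
  \<open>E\<^sup>P\<^sub>n(\<lfloor>\<mu>n\<rfloor>) \<longrightarrow> F(\<mu>)\<close> and \<open>F(\<mu>) + O(1/n)\<close>, and then the defect
  \<open>(\<M>(n)/n - \<mu>)\<^sup>2\<close> tends to \<open>0\<close>.\<close>

lemma strict_mono_on_mult_exp: "strict_mono_on {-1..} (\<lambda>z::real. z * exp z)"
proof (rule strict_mono_onI)
  fix a b :: real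
  assume "a \<in> {-1..}" "a < b"
  show "a * exp a < b * exp b"
  proof (rule DERIV_pos_imp_increasing_open[OF \<open>a < b\<close>])
    fix x assume "a < x"
    with \<open>a \<in> {-1..}\<close> have "0 < (1 + x) * exp x" by simp
    then show "\<exists>y. ((\<lambda>z. z * exp z) has_real_derivative y) (at x) \<and> 0 < y"
      by (intro exI conjI derivative_eq_intros refl) (auto simp: algebra_simps)
  qed (intro continuous_intros)
qed

lemma lambertW_eqI: "-1 \<le> z \<Longrightarrow> lambertW (z * exp z) = z"
  unfolding lambertW_def
  by (rule the_equality) (auto dest: strict_mono_on_eqD[OF strict_mono_on_mult_exp])

lemma lambertW_2: "0 < lambertW 2" "lambertW 2 \<le> 1" "lambertW 2 * exp (lambertW 2) = 2"
proof -
  have "2 \<le> exp (1::real)"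
    using exp_ge_add_one_self[of 1] by simp
  moreover have "\<forall>x. 0 \<le> x \<and> x \<le> 1 \<longrightarrow> isCont (\<lambda>z::real. z * exp z) x"
    by (intro allI impI continuous_intros)
  ultimately obtain z :: real where z: "0 \<le> z" "z \<le> 1" "z * exp z = 2"
    using IVT[of "\<lambda>z::real. z * exp z" 0 2 1] by auto
  with lambertW_eqI[of z] have "lambertW 2 = z" by simp
  moreover have "z \<noteq> 0" using z by auto
  ultimately show "0 < lambertW 2" "lambertW 2 \<le> 1" "lambertW 2 * exp (lambertW 2) = 2"
    using z by auto
qed

lemma mu_pos: "0 < mu" and mu_le_half: "mu \<le> 1/2"
  using lambertW_2 by (auto simp: mu_def)

lemma ln_mu: "ln mu = - 2 * mu"
proof -
  have "mu * exp (2 * mu) = 1"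
    using lambertW_2 by (simp add: mu_def)
  then have "ln (mu * exp (2 * mu)) = 0"
    by simp
  then show ?thesis
    using mu_pos by (simp add: ln_mult)
qed

definition EP_limit :: "real \<Rightarrow> real" where
  "EP_limit x = x * (1 - ln x - x)"

lemma EP_limit_mu: "EP_limit mu = mu * (1 + mu)"
  by (simp add: EP_limit_def ln_mu algebra_simps)

lemma EP_limit_quadratic_bound:
  assumes "0 < x"
  shows "EP_limit x + (x - mu)\<^sup>2 \<le> EP_limit mu"
proof -
  have "ln (mu / x) \<le> mu / x - 1"
    using assms mu_pos by (intro ln_le_minus_one) simp
  then have "x * (ln mu - ln x) \<le> x * (mu / x - 1)"
    using assms mu_pos by (intro mult_left_mono) (simp_all add: ln_div)
  also have "\<dots> = mu - x"
    using assms by (simp add: field_simps)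
  finally show ?thesis
    unfolding EP_limit_def using ln_mu by (simp add: power2_eq_square algebra_simps)
qed

lemma ln_diff_le: "0 < (a::real) \<Longrightarrow> 0 < b \<Longrightarrow> ln b - ln a \<le> b / a - 1"
  using ln_le_minus_one[of "b / a"] by (simp add: ln_div)

lemma ln_diff_le_sum_inverse:
  assumes "1 \<le> r" "r \<le> m"
  shows "ln (real m) - ln (real r) \<le> (\<Sum>j = r..<m. 1 / real j)"
  using assms(2)
proof (induction m rule: dec_induct)
  case (step m)
  have "ln (real (Suc m)) - ln (real m) \<le> real (Suc m) / real m - 1"
    using assms step.hyps by (intro ln_diff_le) auto
  also have "\<dots> = 1 / real m"
    using assms step.hyps by (simp add: field_simps)
  finally show ?case
    using step.IH step.hyps by simp
qed simp

lemma sum_inverse_le_ln_diff: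
  assumes "1 \<le> r" "r \<le> m"
  shows "(\<Sum>j = r..<m. 1 / real j) \<le> 1 / real r + ln (real m) - ln (real r)"
proof -
  have "(\<Sum>j = r..k. 1 / real j) \<le> 1 / real r + ln (real k) - ln (real r)" if "r \<le> k" for k
    using that
  proof (induction k rule: dec_induct)
    case (step k)
    have "ln (real k) - ln (real (Suc k)) \<le> real k / real (Suc k) - 1"
      using assms step.hyps by (intro ln_diff_le) auto
    also have "\<dots> = - 1 / real (Suc k)"
      by (simp add: field_simps)
    finally show ?case
      using step.IH step.hyps by simp
  qed simp
  moreover have "(\<Sum>j = r..<m. 1 / real j) \<le> (\<Sum>j = r..m. 1 / real j)"
    by (intro sum_mono2) auto
  ultimately show ?thesis
    using assms(2) by fastforce
qed

lemma EP_eq_harmonic: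
  assumes "1 \<le> r" "r < n"
  shows "EP n r = (real r / real n) *
    ((1 + 1 / real n) * (\<Sum>j = r..<n. 1 / real j) + (1 - real r / real n))"
proof -
  obtain m where n: "n = Suc m"
    using assms by (cases n) auto
  have "(\<Sum>k = r + 1..n. (1 + real k / real n) / (real k - 1))
      = (\<Sum>j = r..<n. (1 + real (Suc j) / real n) / (real (Suc j) - 1))"
    unfolding n atLeastLessThanSuc_atLeastAtMost Suc_eq_plus1[symmetric]
    by (rule sum.shift_bounds_cl_Suc_ivl)
  also have "\<dots> = (\<Sum>j = r..<n. (1 + 1 / real n) * (1 / real j) + 1 / real n)"
    using assms by (intro sum.cong) (auto simp: field_simps)
  also have "\<dots> = (1 + 1 / real n) * (\<Sum>j = r..<n. 1 / real j) + (1 - real r / real n)"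
    using assms by (simp add: sum.distrib sum_distrib_left diff_divide_distrib)
  finally show ?thesis
    unfolding EP_def by simp
qed

lemma EP_bounds:
  assumes "1 \<le> r" "r < n"
  shows "EP_limit (real r / real n) \<le> EP n r"
    and "EP n r \<le> EP_limit (real r / real n) + 2 / real n"
proof -
  define x where "x = real r / real n"
  define S where "S = (\<Sum>j = r..<n. 1 / real j)"
  define L where "L = ln (real n) - ln (real r)"
  have r: "1 \<le> real r" "real r < real n"
    using assms by auto
  then have x: "0 < x" "x * (1 / real r) = 1 / real n" "x * (real n / real r) = 1"
    by (auto simp: x_def)
  have "EP_limit x = x * (L + 1 - x)"
    using r by (simp add: EP_limit_def x_def L_def ln_div)
  moreover have "EP n r = x * ((1 + 1 / real n) * S + (1 - x))"
    using EP_eq_harmonic[OF assms] by (simp add: x_def S_def)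
  ultimately have EP_diff: "EP n r - EP_limit x = x * (S - L) + x * S / real n"
    by (simp add: algebra_simps)
  have L_nonneg: "0 \<le> L" and L_le: "L \<le> real n / real r - 1"
    unfolding L_def using r by (simp, intro ln_diff_le) auto
  have L_le_S: "L \<le> S" and S_le: "S \<le> 1 / real r + L"
    using ln_diff_le_sum_inverse[of r n] sum_inverse_le_ln_diff[of r n] assms
    by (simp_all add: L_def S_def)
  have "x * (S - L) \<le> x * (1 / real r)"
    using S_le x by (intro mult_left_mono) auto
  then have first: "x * (S - L) \<le> 1 / real n"
    using x(2) by linarith
  have "1 / real r \<le> 1"
    using r by simp
  then have "S \<le> real n / real r"
    using S_le L_le by linarith
  then have "x * S \<le> x * (real n / real r)"
    using x by (intro mult_left_mono) auto
  then have "x * S \<le> 1"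
    using x(3) by linarith
  then have "x * S / real n \<le> 1 / real n"
    by (simp add: divide_right_mono)
  moreover have "0 \<le> x * (S - L)" "0 \<le> x * S / real n"
    using L_le_S L_nonneg x(1) by simp_all
  ultimately show "EP_limit x \<le> EP n r" "EP n r \<le> EP_limit x + 2 / real n"
    using EP_diff first by linarith+
qed

lemma tendsto_floor_mult_div:
  assumes "0 \<le> c"
  shows "(\<lambda>n. real (nat \<lfloor>c * real n\<rfloor>) / real n) \<longlonglongrightarrow> c"
proof (rule tendsto_sandwich)
  have floor: "c * real n - 1 \<le> real (nat \<lfloor>c * real n\<rfloor>)"
    "real (nat \<lfloor>c * real n\<rfloor>) \<le> c * real n" for n
  proof -
    have "real (nat \<lfloor>c * real n\<rfloor>) = of_int \<lfloor>c * real n\<rfloor>"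
      using assms by simp
    then show "c * real n - 1 \<le> real (nat \<lfloor>c * real n\<rfloor>)"
      "real (nat \<lfloor>c * real n\<rfloor>) \<le> c * real n"
      by linarith+
  qed
  show "\<forall>\<^sub>F n in sequentially. c - 1 / real n \<le> real (nat \<lfloor>c * real n\<rfloor>) / real n"
    using eventually_gt_at_top[of 0]
  proof eventually_elim
    case (elim n)
    then have "c - 1 / real n = (c * real n - 1) / real n"
      by (simp add: field_simps)
    also have "\<dots> \<le> real (nat \<lfloor>c * real n\<rfloor>) / real n"
      using floor(1) by (intro divide_right_mono) auto
    finally show ?case .
  qed
  show "\<forall>\<^sub>F n in sequentially. real (nat \<lfloor>c * real n\<rfloor>) / real n \<le> c"
    using eventually_gt_at_top[of 0]
    by eventually_elim (use floor in \<open>simp add: field_simps\<close>)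
  show "(\<lambda>n. c - 1 / real n) \<longlonglongrightarrow> c"
    by real_asymp
qed simp

lemma eventually_floor_mult_between:
  assumes "0 < c" "c < 1"
  shows "\<forall>\<^sub>F n in sequentially. 1 \<le> nat \<lfloor>c * real n\<rfloor> \<and> nat \<lfloor>c * real n\<rfloor> < n"
proof -
  have "\<forall>\<^sub>F n in sequentially. 1 \<le> c * real n"
    using assms by real_asymp
  then show ?thesis
    using eventually_gt_at_top[of 0]
  proof eventually_elim
    case (elim n)
    have "c * real n < real n"
      using assms elim by simp
    then show ?case
      using elim by linarith
  qed
qed

lemma near_maximisers_tendsto:
  fixes f :: "real \<Rightarrow> real" and l a x e :: "nat \<Rightarrow> real"
  assumes quadratic: "\<And>y. y \<in> D \<Longrightarrow> f y + (y - m)\<^sup>2 \<le> f m"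
    and l: "l \<longlonglongrightarrow> f m" and e: "e \<longlonglongrightarrow> 0"
    and near_max: "\<forall>\<^sub>F n in sequentially. l n \<le> a n \<and> a n \<le> f (x n) + e n \<and> x n \<in> D"
  shows "a \<longlonglongrightarrow> f m" and "x \<longlonglongrightarrow> m"
proof -
  have defect: "\<forall>\<^sub>F n in sequentially. (x n - m)\<^sup>2 \<le> f m - a n + e n"
    using near_max by eventually_elim (use quadratic in fastforce)
  show a: "a \<longlonglongrightarrow> f m"
  proof (rule tendsto_sandwich[OF _ _ l])
    show "\<forall>\<^sub>F n in sequentially. l n \<le> a n"
      using near_max by eventually_elim simp
    show "\<forall>\<^sub>F n in sequentially. a n \<le> f m + e n"
      using defect by eventually_elim (smt (verit) zero_le_power2)
    show "(\<lambda>n. f m + e n) \<longlonglongrightarrow> f m"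
      using tendsto_add[OF tendsto_const e] by simp
  qed
  have "(\<lambda>n. \<bar>x n - m\<bar>) \<longlonglongrightarrow> 0"
  proof (rule tendsto_sandwich[of "\<lambda>n. 0"])
    show "\<forall>\<^sub>F n in sequentially. \<bar>x n - m\<bar> \<le> sqrt (f m - a n + e n)"
      using defect by eventually_elim (metis real_sqrt_abs real_sqrt_le_mono)
    show "(\<lambda>n. sqrt (f m - a n + e n)) \<longlonglongrightarrow> 0"
      using tendsto_real_sqrt[OF tendsto_add[OF tendsto_diff[OF tendsto_const[of "f m"] a] e]]
      by simp
  qed simp_all
  then show "x \<longlonglongrightarrow> m"
    by (simp add: tendsto_rabs_zero_iff LIM_zero_iff)
qed

theorem proposition4:
  fixes M :: "nat \<Rightarrow> nat"
  assumes M_range: "\<And>n. n > 1 \<Longrightarrow> 1 \<le> M n \<and> M n \<le> n - 1"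
      and M_max: "\<And>n r. n > 1 \<Longrightarrow> 1 \<le> r \<Longrightarrow> r \<le> n - 1 \<Longrightarrow> EP n r \<le> EP n (M n)"
  shows "((\<lambda>n. real (M n) / real n) \<longlonglongrightarrow> mu) \<and>
         ((\<lambda>n. EP n (M n)) \<longlonglongrightarrow> mu * (1 + mu)) \<and>
         ((\<lambda>n. EP n (nat \<lfloor>mu * real n\<rfloor>)) \<longlonglongrightarrow> mu * (1 + mu))"
proof -
  define R where "R n = nat \<lfloor>mu * real n\<rfloor>" for n
  have R_between: "\<forall>\<^sub>F n in sequentially. 1 \<le> R n \<and> R n < n"
    unfolding R_def using mu_pos mu_le_half by (intro eventually_floor_mult_between) auto
  have "isCont EP_limit mu"
    unfolding EP_limit_def[abs_def] using mu_pos by (intro continuous_intros) auto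
  moreover have "(\<lambda>n. real (R n) / real n) \<longlonglongrightarrow> mu"
    unfolding R_def using mu_pos by (intro tendsto_floor_mult_div) simp
  ultimately have EP_limit_R: "(\<lambda>n. EP_limit (real (R n) / real n)) \<longlonglongrightarrow> EP_limit mu"
    by (rule isCont_tendsto_compose)
  have quadratic: "y \<in> {0<..} \<Longrightarrow> EP_limit y + (y - mu)\<^sup>2 \<le> EP_limit mu" for y
    by (simp add: EP_limit_quadratic_bound)
  have vanishing: "(\<lambda>n. 2 / real n) \<longlonglongrightarrow> 0"
    by real_asymp
  have near_max_R: "\<forall>\<^sub>F n in sequentially. EP_limit (real (R n) / real n) \<le> EP n (R n) \<and>
      EP n (R n) \<le> EP_limit (real (R n) / real n) + 2 / real n \<and> real (R n) / real n \<in> {0<..}"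
    using R_between by eventually_elim (simp add: EP_bounds)
  have "\<forall>\<^sub>F n in sequentially. EP_limit (real (R n) / real n) \<le> EP n (M n) \<and>
      EP n (M n) \<le> EP_limit (real (M n) / real n) + 2 / real n \<and> real (M n) / real n \<in> {0<..}"
    using near_max_R R_between eventually_gt_at_top[of 1]
  proof eventually_elim
    case (elim n)
    with M_range[of n] have "1 \<le> M n" "M n < n"
      by auto
    moreover have "EP n (R n) \<le> EP n (M n)"
      using elim by (intro M_max) auto
    ultimately show ?case
      using elim EP_bounds(2)[of "M n" n] by auto
  qed
  note near_maximisers_tendsto[OF quadratic EP_limit_R vanishing this]
    near_maximisers_tendsto(1)[OF quadratic EP_limit_R vanishing near_max_R]
  then show ?thesis
    by (simp add: EP_limit_mu R_def)
qed

end
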